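(* Let $E$ be a real affine space of dimension $n$, let $\mu\in\mathcal M(E)$ and let $K$ be a convex subset of $E$ satisfying $\mu(E\setminus K)<2^{-n}\mu(E)$. Then every Yao-Yao center of $\mu$ belongs to $K$.
   Context: $\vec E$ denotes the vector space associated with $E$. A partition of $E$ is a collection $\mathcal P$ of subsets of $E$ with $\bigcup\mathcal P=E$ such that the interiors of any two distinct elements of $\mathcal P$ are disjoint. Yao-Yao partitions and their centers are defined by induction on the dimension: if $E=\{x\}$ has dimension $0$, the Yao-Yao partition of $E$ is $\{\{x\}\}$, with center $x$. If $\dim E=n\ge 1$, $\mathcal P$ is a Yao-Yao partition of $E$ with center $x$ if there exist an affine hyperplane $F$ of $E$, a vector $v\in\vec E\setminus\vec F$ and two Yao-Yao partitions $\mathcal P_1,\mathcal P_{-1}$ of $F$ having the same center $x$, such that $\mathcal P=\{A+\mathbb R_- v : A\in\mathcal P_{-1}\}\cup\{A+\mathbb R_+ v: A\in\mathcal P_1\}$. $\mathcal M(E)$ is the set of finite non-negative Borel measures $\mu$ on $E$ such that $\mu(H)=0$ for every affine hyperplane $H$ of $E$. For $\mu\in\mathcal M(E)$, a Yao-Yao equipartition for $\mu$ is a Yao-Yao partition $\mathcal P$ of $E$ with $\mu(A)=2^{-n}\mu(E)$ for all $A\in\mathcal P$; a point $x\in E$ is a Yao-Yao center of $\mu$ if it is the center of some Yao-Yao equipartition for $\mu$. *)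

theory Defs
  imports "HOL-Analysis.Analysis"
begin

text \<open>A real affine space of dimension n is modelled as a nonempty affine subset E of a
Euclidean space with aff_dim E = n.  Its associated vector space is the set of differences.\<close>

definition vec_space :: "'a::euclidean_space set \<Rightarrow> 'a set" where
  "vec_space E = {a - b | a b. a \<in> E \<and> b \<in> E}"

definition affine_hyperplane_of :: "'a::euclidean_space set \<Rightarrow> 'a set \<Rightarrow> bool" where
  "affine_hyperplane_of E H \<longleftrightarrow>
     affine H \<and> H \<noteq> {} \<and> H \<subseteq> E \<and> aff_dim H = aff_dim E - 1"

definition half_cone :: "'a::euclidean_space set \<Rightarrow> real set \<Rightarrow> 'a \<Rightarrow> 'a set" where
  "half_cone A T v = {a + t *\<^sub>R v | a t. a \<in> A \<and> t \<in> T}"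

inductive yao_yao :: "'a::euclidean_space set \<Rightarrow> 'a set set \<Rightarrow> 'a \<Rightarrow> bool" where
  dim0: "yao_yao {x} {{x}} x"
| step: "\<lbrakk> affine E; aff_dim E \<ge> 1; affine_hyperplane_of E F;
           v \<in> vec_space E; v \<notin> vec_space F;
           yao_yao F P1 x; yao_yao F Pm1 x \<rbrakk>
         \<Longrightarrow> yao_yao E ((\<lambda>A. half_cone A {..0} v) ` Pm1 \<union> (\<lambda>A. half_cone A {0..} v) ` P1) x"

definition in_M :: "'a::euclidean_space set \<Rightarrow> 'a measure \<Rightarrow> bool" where
  "in_M E \<mu> \<longleftrightarrow> sets \<mu> = sets (restrict_space borel E) \<and> finite_measure \<mu> \<and>
     (\<forall>H. affine_hyperplane_of E H \<longrightarrow> emeasure \<mu> H = 0)"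

definition yao_yao_equipartition :: "'a::euclidean_space set \<Rightarrow> 'a measure \<Rightarrow> 'a set set \<Rightarrow> 'a \<Rightarrow> bool" where
  "yao_yao_equipartition E \<mu> P x \<longleftrightarrow> yao_yao E P x \<and>
     (\<forall>A\<in>P. A \<in> sets \<mu> \<and> measure \<mu> A = measure \<mu> E / 2 ^ nat (aff_dim E))"

definition yao_yao_center :: "'a::euclidean_space set \<Rightarrow> 'a measure \<Rightarrow> 'a \<Rightarrow> bool" where
  "yao_yao_center E \<mu> x \<longleftrightarrow> (\<exists>P. yao_yao_equipartition E \<mu> P x)"

end

theory Submission
  imports Defs
begin

text \<open>Every Yao-Yao partition centered at x has, for each direction w, a cell lying in the
closed half-space w \<bullet> z \<le> w \<bullet> x: extend the cell chosen in the hyperplane F along the ray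
on which w \<bullet> v has the right sign.  If x \<notin> K, separate x from K inside E by a hyperplane
through x that does not contain E; the cell on the side away from K then lies in
(E - K) \<union> (E \<inter> hyperplane), so up to a null set it is covered by E - K, and its measure
\<mu>(E) / 2^n cannot exceed \<mu>(E - K).\<close>

lemma half_cone_subset_affine:
  assumes "affine E" "A \<subseteq> E" "v \<in> vec_space E"
  shows "half_cone A T v \<subseteq> E"
proof
  fix z assume "z \<in> half_cone A T v"
  then obtain a t where "a \<in> A" "z = a + t *\<^sub>R v" by (auto simp: half_cone_def)
  moreover obtain b c where "b \<in> E" "c \<in> E" "v = b - c"
    using assms(3) by (auto simp: vec_space_def)
  ultimately show "z \<in> E"
    using mem_affine_3_minus[OF assms(1), of a b c t] assms(2) by auto
qed

lemma half_cone_subset_halfspace: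
  assumes "A \<subseteq> {z. w \<bullet> z \<le> c}" "\<And>t. t \<in> T \<Longrightarrow> t * (w \<bullet> v) \<le> 0"
  shows "half_cone A T v \<subseteq> {z. w \<bullet> z \<le> c}"
proof
  fix z assume "z \<in> half_cone A T v"
  then obtain a t where "a \<in> A" "t \<in> T" "z = a + t *\<^sub>R v" by (auto simp: half_cone_def)
  with assms show "z \<in> {z. w \<bullet> z \<le> c}" by (fastforce simp: inner_add_right)
qed

lemma yao_yao_center_mem:
  assumes "yao_yao E P x"
  shows "x \<in> E"
  using assms by induction (auto simp: affine_hyperplane_of_def)

lemma yao_yao_cell_subset:
  assumes "yao_yao E P x" "A \<in> P"
  shows "A \<subseteq> E"
  using assms
proof (induction arbitrary: A)
  case (step E F v P1 x Pm1)
  have "F \<subseteq> E" using step.hyps(3) by (simp add: affine_hyperplane_of_def)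
  obtain A0 T where "A = half_cone A0 T v" "A0 \<subseteq> F" using step.prems step.IH by blast
  with \<open>F \<subseteq> E\<close> show ?case using half_cone_subset_affine[OF step.hyps(1) _ step.hyps(4)] by blast
qed simp

lemma yao_yao_cell_in_halfspace:
  assumes "yao_yao E P x"
  shows "\<exists>A\<in>P. A \<subseteq> {z. w \<bullet> z \<le> w \<bullet> x}"
  using assms
proof induction
  case (step E F v P1 x Pm1)
  show ?case
  proof (cases "w \<bullet> v \<ge> 0")
    case True
    obtain A where "A \<in> Pm1" "A \<subseteq> {z. w \<bullet> z \<le> w \<bullet> x}" using step.IH(2) by blast
    moreover have "half_cone A {..0} v \<subseteq> {z. w \<bullet> z \<le> w \<bullet> x}"
      using calculation True by (intro half_cone_subset_halfspace) (auto simp: mult_nonpos_nonneg)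
    ultimately show ?thesis by blast
  next
    case False
    obtain A where "A \<in> P1" "A \<subseteq> {z. w \<bullet> z \<le> w \<bullet> x}" using step.IH(1) by blast
    moreover have "half_cone A {0..} v \<subseteq> {z. w \<bullet> z \<le> w \<bullet> x}"
      using calculation False by (intro half_cone_subset_halfspace) (auto simp: mult_nonneg_nonpos)
    ultimately show ?thesis by blast
  qed
qed simp

text \<open>Separation relative to E: separating K - x + T from 0, where T is the orthogonal
complement of the direction space of E, forces the normal a out of T, so the hyperplane
a \<bullet> v = a \<bullet> x does not contain E.\<close>

lemma separating_hyperplane_within_affine:
  fixes E K :: "'a::euclidean_space set"
  assumes "affine E" "convex K" "K \<subseteq> E" "K \<noteq> {}" "x \<in> E" "x \<notin> K"
  obtains a where "\<forall>k\<in>K. a \<bullet> x \<le> a \<bullet> k" "\<not> E \<subseteq> {v. a \<bullet> v = a \<bullet> x}"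
proof -
  define T where "T = {q. \<forall>s\<in>E. \<forall>s'\<in>E. q \<bullet> (s - s') = 0}"
  define C where "C = (+) (-x) ` (\<Union>k\<in>K. \<Union>q\<in>T. {k + q})"
  have "subspace T" unfolding T_def subspace_def by (auto simp: inner_add_left)
  then have "convex C"
    unfolding C_def by (intro convex_translation convex_sums assms(2) subspace_imp_convex)
  have "0 \<notin> C"
  proof
    assume "0 \<in> C"
    then obtain k where "k \<in> K" "x - k \<in> T" by (auto simp: C_def algebra_simps)
    with assms(3,5) have "(x - k) \<bullet> (x - k) = 0" unfolding T_def by blast
    with \<open>k \<in> K\<close> assms(6) show False by simp
  qed
  then obtain a where "a \<noteq> 0" and a: "\<forall>c\<in>C. 0 \<le> a \<bullet> c"
    using separating_hyperplane_set_0[OF \<open>convex C\<close>] by blast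
  have "-x + (k + q) \<in> C" if "k \<in> K" "q \<in> T" for k q
    using that unfolding C_def by blast
  then have sep: "0 \<le> a \<bullet> (k - x) + a \<bullet> q" if "k \<in> K" "q \<in> T" for k q
    using a that by (fastforce simp: inner_add_right inner_diff_right)
  have "0 \<in> T" by (simp add: T_def)
  then have "\<forall>k\<in>K. a \<bullet> x \<le> a \<bullet> k"
    using sep[OF _ \<open>0 \<in> T\<close>] by (simp add: inner_diff_right)
  moreover have "\<not> E \<subseteq> {v. a \<bullet> v = a \<bullet> x}"
  proof
    assume "E \<subseteq> {v. a \<bullet> v = a \<bullet> x}"
    then have "\<forall>s\<in>E. a \<bullet> s = a \<bullet> x" by blast
    then have "a \<in> T" by (simp add: T_def inner_diff_right)
    obtain k where "k \<in> K" using assms(4) by blast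
    with \<open>a \<in> T\<close> assms(3,5) have "a \<bullet> (k - x) = 0" by (auto simp: T_def)
    moreover have "-a \<in> T" using \<open>a \<in> T\<close> by (simp add: T_def)
    ultimately have "a \<bullet> a \<le> 0" using sep[OF \<open>k \<in> K\<close>] by fastforce
    with \<open>a \<noteq> 0\<close> show False by (metis inner_gt_zero_iff not_le)
  qed
  ultimately show thesis by (rule that)
qed

lemma in_M_hyperplane_section_null:
  assumes "in_M E \<mu>" "affine E" "x \<in> E" "\<not> E \<subseteq> {v. a \<bullet> v = a \<bullet> x}"
  shows "E \<inter> {v. a \<bullet> v = a \<bullet> x} \<in> null_sets \<mu>"
proof -
  let ?Z = "E \<inter> {v. a \<bullet> v = a \<bullet> x}"
  have "aff_dim ?Z = aff_dim E - 1"
    using aff_dim_affine_Int_hyperplane[OF assms(2), of a "a \<bullet> x"] assms(3,4) by auto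
  with assms(2,3) have "affine_hyperplane_of E ?Z"
    by (auto simp: affine_hyperplane_of_def intro: affine_Int affine_hyperplane)
  moreover have "?Z \<in> sets \<mu>"
    using assms(1) closed_hyperplane[of a "a \<bullet> x"]
    by (auto simp: in_M_def sets_restrict_space)
  ultimately show ?thesis using assms(1) by (simp add: in_M_def null_sets_def)
qed

lemma yao_yao_cell_almost_outside_convex:
  assumes "yao_yao E P x" "in_M E \<mu>" "affine E" "convex K" "K \<subseteq> E" "x \<notin> K"
  shows "\<exists>A\<in>P. \<exists>Z\<in>null_sets \<mu>. A \<subseteq> (E - K) \<union> Z"
proof (cases "K = {}")
  case True
  then show ?thesis
    using yao_yao_cell_in_halfspace[OF assms(1), of 0] yao_yao_cell_subset[OF assms(1)] by blast
next
  case False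
  have "x \<in> E" using assms(1) by (rule yao_yao_center_mem)
  obtain a where aK: "\<forall>k\<in>K. a \<bullet> x \<le> a \<bullet> k" and aE: "\<not> E \<subseteq> {v. a \<bullet> v = a \<bullet> x}"
    by (rule separating_hyperplane_within_affine[OF assms(3-5) False \<open>x \<in> E\<close> assms(6)])
  obtain A where "A \<in> P" "A \<subseteq> {z. a \<bullet> z \<le> a \<bullet> x}"
    using yao_yao_cell_in_halfspace[OF assms(1)] by blast
  moreover have "A \<subseteq> E" using assms(1) \<open>A \<in> P\<close> by (rule yao_yao_cell_subset)
  ultimately have "A \<subseteq> (E - K) \<union> (E \<inter> {v. a \<bullet> v = a \<bullet> x})"
    using aK by fastforce
  with \<open>A \<in> P\<close> in_M_hyperplane_section_null[OF assms(2,3) \<open>x \<in> E\<close> aE] show ?thesis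
    by (intro bexI) auto
qed

theorem proposition5:
  fixes E K :: "'a::euclidean_space set" and \<mu> :: "'a measure" and n :: nat and x :: 'a
  assumes "affine E" and "E \<noteq> {}" and "aff_dim E = int n"
    and "in_M E \<mu>"
    and "convex K" and "K \<subseteq> E"
    and "\<exists>B\<in>sets \<mu>. E - K \<subseteq> B \<and> measure \<mu> B < measure \<mu> E / 2 ^ n"
    and "yao_yao_center E \<mu> x"
  shows "x \<in> K"
proof (rule ccontr)
  assume "x \<notin> K"
  obtain B where B: "B \<in> sets \<mu>" "E - K \<subseteq> B" "measure \<mu> B < measure \<mu> E / 2 ^ n"
    using assms(7) by blast
  obtain P where "yao_yao E P x" and cells: "\<And>A. A \<in> P \<Longrightarrow> measure \<mu> A = measure \<mu> E / 2 ^ n"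
    using assms(3,8) by (auto simp: yao_yao_center_def yao_yao_equipartition_def)
  then obtain A Z where "A \<in> P" "Z \<in> null_sets \<mu>" "A \<subseteq> B \<union> Z"
    using yao_yao_cell_almost_outside_convex[OF _ assms(4,1,5,6) \<open>x \<notin> K\<close>] B(2) by blast
  interpret finite_measure \<mu> using assms(4) by (simp add: in_M_def)
  have "measure \<mu> A \<le> measure \<mu> (B \<union> Z)"
    using \<open>A \<subseteq> B \<union> Z\<close> B(1) \<open>Z \<in> null_sets \<mu>\<close> by (intro finite_measure_mono) auto
  also have "\<dots> = measure \<mu> B" using B(1) \<open>Z \<in> null_sets \<mu>\<close> by (rule measure_Un_null_set)
  finally show False using cells[OF \<open>A \<in> P\<close>] B(3) by linarith
qed

end
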